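(* Let $R$ be a $*$-reducing ring and let $p,q\in R$ be projections. Then the following are equivalent: (1) $p(1-q)$ is MP invertible; (2) $p-q$ is MP invertible; (3) $(1-p)q$ is MP invertible.
   Context: $R$ is an associative ring with identity $1$ and an involution $a\mapsto a^*$ (satisfying $(a^* )^*=a$, $(a+b)^*=a^*+b^*$, $(ab)^*=b^*a^*$). $R$ is $*$-reducing if $a^*a=0$ implies $a=0$ for all $a\in R$. An element $a$ is MP invertible if there is $b$ with $aba=a$, $bab=b$, $(ab)^*=ab$, $(ba)^*=ba$; this $b$ is unique and written $a^{\dagger}$. A projection is an element $p$ with $p^2=p=p^*$. *)

theory Defs
  imports Main
begin

class inv_ring = ring_1 +
  fixes star :: "'a \<Rightarrow> 'a"
  assumes star_star: "star (star a) = a"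
    and star_add: "star (a + b) = star a + star b"
    and star_mult: "star (a * b) = star b * star a"

definition star_reducing :: "'a::inv_ring itself \<Rightarrow> bool" where
  "star_reducing _ \<longleftrightarrow> (\<forall>a::'a. star a * a = 0 \<longrightarrow> a = 0)"

definition is_mp_inverse :: "'a::inv_ring \<Rightarrow> 'a \<Rightarrow> bool" where
  "is_mp_inverse a b \<longleftrightarrow> a * b * a = a \<and> b * a * b = b
     \<and> star (a * b) = a * b \<and> star (b * a) = b * a"

definition mp_invertible :: "'a::inv_ring \<Rightarrow> bool" where
  "mp_invertible a \<longleftrightarrow> (\<exists>b. is_mp_inverse a b)"

definition projection :: "'a::inv_ring \<Rightarrow> bool" where
  "projection p \<longleftrightarrow> p * p = p \<and> star p = p"

end

theory Submission
  imports Defs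
begin

text \<open>An element \<open>a\<close> of a ring with involution is MP invertible exactly when
  \<open>a \<in> a a\<^sup>* R \<inter> R a\<^sup>* a\<close>. For projections \<open>p, q\<close> put \<open>a = p(1 - q)\<close> and \<open>c = p - q\<close>;
  then \<open>a a\<^sup>* = c\<^sup>2 p\<close>, \<open>a\<^sup>* a = c\<^sup>2 (1 - q)\<close>, \<open>c\<^sup>2\<close> commutes with \<open>p\<close> and \<open>q\<close>, and
  \<open>c (1 - q) = p c = a\<close>. These identities transport the range conditions between
  \<open>a\<close> and the self-adjoint element \<open>c\<close>, for which they reduce to \<open>c \<in> c\<^sup>2 R\<close>.
  Replacing \<open>p, q\<close> by \<open>1 - p, 1 - q\<close> turns \<open>p - q\<close> into \<open>q - p\<close> and \<open>p(1 - q)\<close>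
  into \<open>(1 - p) q\<close>.\<close>

lemma star_one [simp]: "star (1::'a::inv_ring) = 1"
  by (metis mult_1_left mult_1_right star_mult star_star)

lemma star_zero [simp]: "star (0::'a::inv_ring) = 0"
  by (metis add_cancel_right_right star_add)

lemma star_minus [simp]: "star (- a) = - star (a::'a::inv_ring)"
  by (metis add.right_inverse add_eq_0_iff star_add star_zero)

lemma star_diff [simp]: "star (a - b) = star a - star (b::'a::inv_ring)"
  by (metis diff_conv_add_uminus star_add star_minus)

declare star_star [simp] star_add [simp] star_mult [simp]

lemma is_mp_inverse_neg: "is_mp_inverse (- a) b \<longleftrightarrow> is_mp_inverse (a::'a::inv_ring) (- b)"
  unfolding is_mp_inverse_def
  by (auto simp: minus_equation_iff[of "a * b * a"] minus_equation_iff[of "b * a * b"])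

lemma mp_invertible_neg [simp]: "mp_invertible (- a) \<longleftrightarrow> mp_invertible (a::'a::inv_ring)"
  unfolding mp_invertible_def is_mp_inverse_neg by (metis minus_minus)

lemma is_mp_inverse_self_adjoint:
  fixes s z :: "'a::inv_ring"
  assumes s: "star s = s" and z: "s * s * z = s"
  shows "is_mp_inverse s (star z * s * z)"
proof -
  have zs: "star z * s * s = s"
    using arg_cong[OF z, of star] s by (simp add: mult.assoc)
  have "star z * s = star z * s * s * z"
    using z by (simp add: mult.assoc)
  then have comm: "star z * s = s * z"
    using zs by simp
  have szs: "s * z * s = s"
    using zs by (simp flip: comm)
  show ?thesis
    unfolding is_mp_inverse_def
  proof (intro conjI)
    have "s * (star z * s * z) * s = s * s * z * (z * s)"
      by (simp add: comm mult.assoc)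
    also have "\<dots> = s * z * s"
      by (simp only: z flip: mult.assoc)
    finally show "s * (star z * s * z) * s = s"
      using szs by simp
    have "star z * s * z * s * (star z * s * z) = star z * (s * z * s) * (s * z * z)"
      by (metis comm mult.assoc)
    also have "\<dots> = star z * (s * s * z) * z"
      using szs by (metis mult.assoc)
    finally show "star z * s * z * s * (star z * s * z) = star z * s * z"
      using z by simp
    have "s * (star z * s * z) = s * z"
      using z comm by (metis mult.assoc)
    then show "star (s * (star z * s * z)) = s * (star z * s * z)"
      by (simp add: s comm)
    have "star z * s * z * s = s * z"
      using szs comm by (metis mult.assoc)
    then show "star (star z * s * z * s) = star z * s * z * s"
      by (simp add: s comm)
  qed
qed

lemma is_mp_inverse_via_gram:
  fixes a w x :: "'a::inv_ring"
  assumes w: "is_mp_inverse (a * star a) w" "star w = w"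
    and x: "a * star a * x = a"
  shows "is_mp_inverse a (star a * w)"
proof -
  have gram: "a * star a * w * (a * star a) = a * star a" "w * (a * star a) * w = w"
    "star (a * star a * w) = a * star a * w"
    using w(1) unfolding is_mp_inverse_def by auto
  have "a * (star a * w) * a = a * star a * w * (a * star a) * x"
    using x by (simp add: mult.assoc)
  then have "a * (star a * w) * a = a"
    using gram(1) x by simp
  moreover have "star a * w * a * (star a * w) = star a * (w * (a * star a) * w)"
    by (simp add: mult.assoc)
  ultimately show ?thesis
    using gram(2,3) w(2) unfolding is_mp_inverse_def by (simp add: mult.assoc)
qed

lemma mp_invertible_iff_ranges:
  fixes a :: "'a::inv_ring"
  shows "mp_invertible a \<longleftrightarrow> (\<exists>x. a * star a * x = a) \<and> (\<exists>y. y * star a * a = a)"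
proof
  assume "mp_invertible a"
  then obtain b where b: "a * b * a = a" "star (a * b) = a * b" "star (b * a) = b * a"
    unfolding mp_invertible_def is_mp_inverse_def by blast
  have "a * star a * star b = a * star (b * a)"
    by (simp add: mult.assoc)
  then have "a * star a * star b = a"
    using b(1,3) by (simp add: mult.assoc)
  moreover have "star b * star a * a = star (a * b) * a"
    by (simp add: mult.assoc)
  then have "star b * star a * a = a"
    using b(1,2) by simp
  ultimately show "(\<exists>x. a * star a * x = a) \<and> (\<exists>y. y * star a * a = a)"
    by blast
next
  assume "(\<exists>x. a * star a * x = a) \<and> (\<exists>y. y * star a * a = a)"
  then obtain x y where x: "a * star a * x = a" and y: "y * star a * a = a"
    by blast
  have y': "star a * a * star y = star a"
    using arg_cong[OF y, of star] by (simp add: mult.assoc)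
  have "a * star a * (a * star a) * (x * star y) = a * (star a * a * star y)"
    using x by (metis mult.assoc)
  then have "a * star a * (a * star a) * (x * star y) = a * star a"
    using y' by simp
  then have "is_mp_inverse (a * star a) (star (x * star y) * (a * star a) * (x * star y))"
    by (intro is_mp_inverse_self_adjoint) simp_all
  moreover have "star (star (x * star y) * (a * star a) * (x * star y))
      = star (x * star y) * (a * star a) * (x * star y)"
    by (simp add: mult.assoc)
  ultimately show "mp_invertible a"
    unfolding mp_invertible_def using x by (blast intro: is_mp_inverse_via_gram)
qed

lemma mp_invertible_self_adjoint_iff:
  fixes c :: "'a::inv_ring"
  assumes "star c = c"
  shows "mp_invertible c \<longleftrightarrow> (\<exists>u. c * c * u = c)"
proof -
  have "star u * c * c = c" if "c * c * u = c" for u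
    using arg_cong[OF that, of star] assms by (simp add: mult.assoc)
  then show ?thesis
    using assms by (auto simp: mp_invertible_iff_ranges)
qed

lemma projection_one_minus: "projection p \<Longrightarrow> projection (1 - (p::'a::inv_ring))"
  unfolding projection_def by (simp add: algebra_simps)

context
  fixes p q :: "'a::inv_ring"
  assumes p: "projection p" and q: "projection q"
begin

private lemma idem: "p * p = p" "p * (p * x) = p * x" "q * q = q" "q * (q * x) = q * x"
  using p q unfolding projection_def by (metis mult.assoc)+

private lemma self_adjoint: "star p = p" "star q = q"
  using p q unfolding projection_def by auto

private lemmas proj_simps = idem self_adjoint algebra_simps

lemma proj_diff_square_commute: "(p - q) * (p - q) * p = p * ((p - q) * (p - q))"
  by (simp add: proj_simps)

lemma proj_gram_right: "p * (1 - q) * star (p * (1 - q)) = (p - q) * (p - q) * p"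
  by (simp add: proj_simps)

lemma proj_gram_left: "star (p * (1 - q)) * (p * (1 - q)) = (p - q) * (p - q) * (1 - q)"
  by (simp add: proj_simps)

lemma proj_diff_mult_compl: "(p - q) * (1 - q) = p * (1 - q)"
  by (simp add: proj_simps)

lemma proj_mult_diff: "p * (p - q) = p * (1 - q)"
  by (simp add: proj_simps)

text \<open>Each summand lies in \<open>(p - q)\<^sup>2 R\<close> as soon as \<open>a = p(1 - q)\<close> lies in \<open>a a\<^sup>* R\<close> and
  \<open>a\<^sup>*\<close> lies in \<open>a\<^sup>* a R\<close>, because \<open>(p - q)\<^sup>2\<close> commutes with \<open>p + q - 1\<close>.\<close>

lemma proj_diff_decompose:
  "p - q = p * (1 - q) - (p + q - 1) * star (p * (1 - q)) - (p - q) * (p - q) * (1 - p)"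
  by (simp add: proj_simps)

lemma proj_diff_square_commute_sum:
  "(p + q - 1) * ((p - q) * (p - q)) = (p - q) * (p - q) * (p + q - 1)"
  by (simp add: proj_simps)

lemma mp_invertible_proj_diff_if:
  assumes "mp_invertible (p * (1 - q))"
  shows "mp_invertible (p - q)"
proof -
  define a c where "a = p * (1 - q)" and "c = p - q"
  note gram_right = proj_gram_right[folded a_def c_def]
    and gram_left = proj_gram_left[folded a_def c_def]
  obtain x y where x: "a * star a * x = a" and y: "y * star a * a = a"
    using assms by (auto simp: mp_invertible_iff_ranges a_def)
  have a_range: "a = c * c * (p * x)"
    using x gram_right by (metis mult.assoc)
  have "star a = star a * a * star y"
    using arg_cong[OF y, of star] by (simp add: mult.assoc)
  then have "(p + q - 1) * star a = (p + q - 1) * (c * c) * ((1 - q) * star y)"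
    using gram_left by (simp add: mult.assoc)
  then have star_a_range: "(p + q - 1) * star a = c * c * ((p + q - 1) * (1 - q) * star y)"
    using proj_diff_square_commute_sum by (simp add: c_def mult.assoc)
  have "c = c * c * (p * x - (p + q - 1) * (1 - q) * star y - (1 - p))"
    using proj_diff_decompose[folded a_def c_def] a_range star_a_range
    by (simp add: right_diff_distrib)
  moreover have "star c = c"
    using self_adjoint by (simp add: c_def)
  ultimately show ?thesis
    using mp_invertible_self_adjoint_iff c_def by metis
qed

lemma mp_invertible_proj_diff_only_if:
  assumes "mp_invertible (p - q)"
  shows "mp_invertible (p * (1 - q))"
proof -
  define a c where "a = p * (1 - q)" and "c = p - q"
  obtain u where u: "c * c * u = c"
    using assms self_adjoint by (auto simp: mp_invertible_self_adjoint_iff c_def)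
  have u': "star u * c * c = c"
    using arg_cong[OF u, of star] self_adjoint by (simp add: c_def mult.assoc)
  have "a * star a * u = p * (c * c * u)"
    using proj_gram_right proj_diff_square_commute by (simp add: a_def c_def mult.assoc)
  then have "a * star a * u = a"
    using u proj_mult_diff by (simp add: a_def c_def)
  moreover have "star u * star a * a = star u * c * c * (1 - q)"
    using proj_gram_left[folded a_def c_def] by (simp add: mult.assoc)
  then have "star u * star a * a = a"
    using u' proj_diff_mult_compl by (simp add: a_def c_def)
  ultimately show ?thesis
    using mp_invertible_iff_ranges a_def by blast
qed

lemma mp_invertible_proj_compl_iff_diff:
  "mp_invertible (p * (1 - q)) \<longleftrightarrow> mp_invertible (p - q)"
  using mp_invertible_proj_diff_if mp_invertible_proj_diff_only_if by blast

end

theorem corollary2p8: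
  fixes p q :: "'a::inv_ring"
  assumes "star_reducing TYPE('a)"
    and "projection p" and "projection q"
  shows "(mp_invertible (p * (1 - q)) \<longleftrightarrow> mp_invertible (p - q))
       \<and> (mp_invertible (p - q) \<longleftrightarrow> mp_invertible ((1 - p) * q))"
proof
  show "mp_invertible (p * (1 - q)) \<longleftrightarrow> mp_invertible (p - q)"
    using assms(2,3) by (rule mp_invertible_proj_compl_iff_diff)
  have "mp_invertible ((1 - p) * (1 - (1 - q))) \<longleftrightarrow> mp_invertible ((1 - p) - (1 - q))"
    using assms(2,3) by (intro mp_invertible_proj_compl_iff_diff projection_one_minus)
  then show "mp_invertible (p - q) \<longleftrightarrow> mp_invertible ((1 - p) * q)"
    by (simp flip: mp_invertible_neg[of "p - q"])
qed

end
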